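(* Let $(X,Y,G)$ be random with $X\in\mathcal{X}$, $Y\in\{0,1\}$, $G\in\{a,b\}$, $\Pr[G=g]>0$ and $0<p_g<1$ for $g\in\{a,b\}$, where $p_g:=\Pr[Y=1\mid G=g]$, and $\Delta p:=p_a-p_b\neq0$. Let $k$ be a measurable positive-definite kernel on $\mathcal{X}$ with RKHS $\mathcal{H}$, feature map $\phi$ and $\sup_x k(x,x)\le\kappa^2<\infty$. Let $P_g$ be the law of $X$ given $G=g$, $Q:=\tfrac12(P_a+P_b)$, $\mu:=\mathbb{E}_{X\sim Q}[\phi(X)]$, $\Sigma:=\mathbb{E}_{X\sim Q}[(\phi(X)-\mu)\otimes(\phi(X)-\mu)]=\sum_j\lambda_j e_j\otimes e_j$ with $\lambda_1\ge\lambda_2\ge\cdots\ge0$ and $\{e_j\}$ orthonormal, and assume there exist $\alpha>1$, $c_1,c_2>0$ with $c_1j^{-\alpha}\le\lambda_j\le c_2j^{-\alpha}$ for all $j$. Let $\mu_{y,g}:=\mathbb{E}[\phi(X)\mid Y=y,G=g]$, $\delta_y:=\mu_{y,a}-\mu_{y,b}$, and assume, for fixed $r>0$, $R>0$, that $\delta_y=\Sigma^r u_y$ with $\|u_y\|_{\mathcal{H}}\le R$ for $y\in\{0,1\}$. Let $S=\langle w,\phi(X)\rangle_{\mathcal{H}}\in[0,1]$ a.s. with $\|w\|_{\mathcal{H}}\le W$ and $\mathbb{E}[S\mid G=g]=p_g$ for $g\in\{a,b\}$. Let $V_m:=\operatorname{span}\{e_1,\dots,e_m\}$ and suppose $P_{V_m}\delta_y=0$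 for $y\in\{0,1\}$. Then, with $\rho_m:=\max_{h\in\{a,b\}}[p_h\|\delta_1\|_{\mathcal{H}}+(1-p_h)\|\delta_0\|_{\mathcal{H}}]$, \[\rho_m\le R\lambda_{m+1}^r=\Theta\big(R(m+1)^{-\alpha r}\big),\quad\text{hence}\quad \Pr[|S-Y|>t]\le\frac{W R\lambda_{m+1}^r}{|\Delta p|\,t}\ \text{ for all } t\in(0,1].\] Moreover, if these hypotheses (for the fixed distribution and fixed $S$) hold for a sequence of values $m\to\infty$, then $S=Y$ almost surely.
   Context: $P_{V_m}$ is the orthogonal projection onto $V_m$; $\Sigma^r$ is defined by functional calculus ($\Sigma^re_j=\lambda_j^re_j$). Implicit constants in $\Theta$ depend only on $c_1,c_2,r$. *)

theory Defs
  imports "HOL-Probability.Probability"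
begin

definition cond_exp_ev :: "'a measure \<Rightarrow> 'a set \<Rightarrow> ('a \<Rightarrow> real) \<Rightarrow> real" where
  "cond_exp_ev M A f = (\<integral>\<omega>. indicator A \<omega> * f \<omega> \<partial>M) / measure M A"

definition cond_prob_ev :: "'a measure \<Rightarrow> 'a set \<Rightarrow> 'a set \<Rightarrow> real" where
  "cond_prob_ev M A B = measure M (A \<inter> B) / measure M A"

definition orth_proj :: "'h::real_inner set \<Rightarrow> 'h \<Rightarrow> 'h" where
  "orth_proj V x = (THE p. p \<in> V \<and> (\<forall>v\<in>V. (x - p) \<bullet> v = 0))"

text \<open>Functional calculus Sigma^r for Sigma = sum_{j>=1} lam_j e_j (x) e_j (orthonormal e_j, j >= 1),
  r > 0: Sigma^r e_j = lam_j^r e_j and Sigma^r = 0 on the orthogonal complement of the e_j.\<close>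
definition spec_pow :: "(nat \<Rightarrow> real) \<Rightarrow> (nat \<Rightarrow> 'h::{real_inner,complete_space}) \<Rightarrow> real \<Rightarrow> 'h \<Rightarrow> 'h" where
  "spec_pow lam e r u = (\<Sum>j. (lam (Suc j) powr r * (e (Suc j) \<bullet> u)) *\<^sub>R e (Suc j))"

end

theory Submission
  imports Defs
begin

(* Write s(y,g) = E[S | Y = y, G = g] = <mu(y,g), w>. Calibration in group g says
   p_g = p_g s(1,g) + (1 - p_g) s(0,g); hence the gap x_g = 1 - s(1,g) + s(0,g) is nonnegative
   and the group's error E[|S - Y| | G = g] = 2 p_g (1 - p_g) x_g is at most x_g / 2.
   Subtracting the calibration identities of the two groups gives
   Delta p * x_a = p_b (s(1,a) - s(1,b)) + (1 - p_b) (s(0,a) - s(0,b)), a convex combination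
   of the numbers <delta_y, w>, so |Delta p| x_g <= W rho and E|S - Y| <= W rho / (2 |Delta p|);
   Markov's inequality gives the tail bound.
   Under the source condition delta_y = Sigma^r u_y, the coefficient of delta_y along e_j is
   lambda_j^r <e_j, u_y>; it vanishes for j <= m, so Bessel's inequality and the monotonicity
   of lambda give ||delta_y|| <= R lambda_(m+1)^r. If this holds for infinitely many m,
   rho = 0 by the power-law decay, hence E|S - Y| = 0. *)

definition orthonormal_on :: "'i set \<Rightarrow> ('i \<Rightarrow> 'h::real_inner) \<Rightarrow> bool" where
  "orthonormal_on A e \<longleftrightarrow> (\<forall>i\<in>A. \<forall>j\<in>A. e i \<bullet> e j = (if i = j then 1 else 0))"

lemma norm_sum_orthonormal:
  assumes "orthonormal_on A e" "finite B" "B \<subseteq> A"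
  shows "(norm (\<Sum>j\<in>B. c j *\<^sub>R e j))\<^sup>2 = (\<Sum>j\<in>B. (c j)\<^sup>2)"
proof -
  have "pairwise (\<lambda>i j. orthogonal (c i *\<^sub>R e i) (c j *\<^sub>R e j)) B"
    using assms(1,3) by (auto simp: pairwise_def orthogonal_def orthonormal_on_def subset_iff)
  moreover have "(norm (c j *\<^sub>R e j))\<^sup>2 = (c j)\<^sup>2" if "j \<in> B" for j
  proof -
    have "norm (e j) = 1"
      using assms(1,3) that by (auto simp: orthonormal_on_def norm_eq_sqrt_inner)
    then show ?thesis
      by (simp add: power_mult_distrib)
  qed
  ultimately show ?thesis
    using assms(2) by (simp add: norm_sum_Pythagorean)
qed

lemma inner_sum_orthonormal:
  assumes "orthonormal_on A e" "finite B" "B \<subseteq> A" "i \<in> A"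
  shows "(\<Sum>j\<in>B. c j *\<^sub>R e j) \<bullet> e i = (if i \<in> B then c i else 0)"
proof -
  have "(\<Sum>j\<in>B. c j *\<^sub>R e j) \<bullet> e i = (\<Sum>j\<in>B. if j = i then c j else 0)"
    using assms unfolding orthonormal_on_def inner_sum_left
    by (intro sum.cong) (auto simp: subset_iff)
  with assms(2) show ?thesis by simp
qed

lemma bessel_inequality:
  assumes "orthonormal_on A e" "finite B" "B \<subseteq> A"
  shows "(\<Sum>j\<in>B. (e j \<bullet> u)\<^sup>2) \<le> (norm u)\<^sup>2"
proof -
  define v where "v = (\<Sum>j\<in>B. (e j \<bullet> u) *\<^sub>R e j)"
  have "u \<bullet> v = (\<Sum>j\<in>B. (e j \<bullet> u)\<^sup>2)"
    unfolding v_def by (simp add: inner_sum_right power2_eq_square inner_commute)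
  moreover have "(norm v)\<^sup>2 = (\<Sum>j\<in>B. (e j \<bullet> u)\<^sup>2)"
    unfolding v_def using assms by (rule norm_sum_orthonormal)
  moreover have "(norm (u - v))\<^sup>2 = (norm u)\<^sup>2 - 2 * (u \<bullet> v) + (norm v)\<^sup>2"
    by (simp add: power2_norm_eq_inner inner_diff_left inner_diff_right inner_commute)
  ultimately show ?thesis
    using zero_le_power2[of "norm (u - v)"] by linarith
qed

lemma summable_bessel:
  assumes "orthonormal_on UNIV e"
  shows "summable (\<lambda>j. (e j \<bullet> u)\<^sup>2)"
  using bessel_inequality[OF assms finite_lessThan subset_UNIV]
  by (intro summableI_nonneg_bounded) auto

lemma summable_orthonormal_series:
  fixes e :: "nat \<Rightarrow> 'h::{real_inner,complete_space}"
  assumes "orthonormal_on UNIV e" "summable (\<lambda>j. (c j)\<^sup>2)"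
  shows "summable (\<lambda>j. c j *\<^sub>R e j)"
proof -
  define s where "s n = (\<Sum>j<n. c j *\<^sub>R e j)" for n
  have dist_s: "(dist (s n) (s m))\<^sup>2 = \<bar>\<Sum>j\<in>{m..<n}. (c j)\<^sup>2\<bar>" if "m \<le> n" for m n
  proof -
    have "s n - s m = (\<Sum>j\<in>{m..<n}. c j *\<^sub>R e j)"
      unfolding s_def using that by (metis sum_diff_nat_ivl lessThan_atLeast0 zero_le)
    then show ?thesis
      using norm_sum_orthonormal[OF assms(1), of "{m..<n}" c]
      by (simp add: dist_norm sum_nonneg)
  qed
  have "Cauchy s"
  proof (rule metric_CauchyI)
    fix \<epsilon> :: real
    assume "\<epsilon> > 0"
    then obtain N where N: "\<And>m n. m \<ge> N \<Longrightarrow> norm (\<Sum>j\<in>{m..<n}. (c j)\<^sup>2) < \<epsilon>\<^sup>2"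
      using assms(2) unfolding summable_Cauchy by (meson zero_less_power)
    have "dist (s m) (s n) < \<epsilon>" if "m \<ge> N" "n \<ge> N" for m n
    proof -
      have "(dist (s m) (s n))\<^sup>2 < \<epsilon>\<^sup>2"
        using dist_s[of m n] dist_s[of n m] N[of m n] N[of n m] that
        by (cases "m \<le> n") (auto simp: dist_commute)
      with \<open>\<epsilon> > 0\<close> show ?thesis
        by (simp add: power_less_imp_less_base)
    qed
    then show "\<exists>N. \<forall>m\<ge>N. \<forall>n\<ge>N. dist (s m) (s n) < \<epsilon>" by blast
  qed
  then show ?thesis
    unfolding summable_def sums_def s_def by (simp add: Cauchy_convergent_iff convergent_def)
qed

lemma inner_orthonormal_series:
  assumes "orthonormal_on UNIV e" "(\<lambda>j. c j *\<^sub>R e j) sums x"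
  shows "e i \<bullet> x = c i"
proof -
  have "(\<lambda>j. e i \<bullet> (c j *\<^sub>R e j)) sums (e i \<bullet> x)"
    by (rule bounded_linear.sums[OF bounded_linear_inner_right assms(2)])
  moreover have "(\<lambda>j. e i \<bullet> (c j *\<^sub>R e j)) = (\<lambda>j. if j = i then c j else 0)"
    using assms(1) by (auto simp: fun_eq_iff orthonormal_on_def)
  ultimately show ?thesis
    using sums_unique2 sums_single by metis
qed

lemma norm_orthonormal_series_le:
  assumes "orthonormal_on UNIV e" "(\<lambda>j. c j *\<^sub>R e j) sums x"
    and "0 \<le> L" "\<And>j. \<bar>c j\<bar> \<le> L * \<bar>e j \<bullet> u\<bar>"
  shows "norm x \<le> L * norm u"
proof -
  have partial_le: "norm (\<Sum>j<n. c j *\<^sub>R e j) \<le> L * norm u" for n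
  proof -
    have "(norm (\<Sum>j<n. c j *\<^sub>R e j))\<^sup>2 = (\<Sum>j<n. (c j)\<^sup>2)"
      using assms(1) by (rule norm_sum_orthonormal) auto
    also have "\<dots> \<le> (\<Sum>j<n. L\<^sup>2 * (e j \<bullet> u)\<^sup>2)"
      using assms(4)
      by (intro sum_mono) (metis abs_ge_zero power2_abs power_mono power_mult_distrib)
    also have "\<dots> \<le> L\<^sup>2 * (norm u)\<^sup>2"
      using bessel_inequality[OF assms(1), of "{..<n}" u]
      by (simp add: sum_distrib_left[symmetric] mult_left_mono)
    finally show ?thesis
      using assms(3) by (simp add: power2_le_iff_abs_le power_mult_distrib[symmetric])
  qed
  have "(\<lambda>n. norm (\<Sum>j<n. c j *\<^sub>R e j)) \<longlonglongrightarrow> norm x"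
    using assms(2) unfolding sums_def by (rule tendsto_norm)
  then show ?thesis
    using LIMSEQ_le_const2 partial_le by blast
qed

lemma orth_proj_eqI:
  assumes "subspace V" "p \<in> V" "\<And>v. v \<in> V \<Longrightarrow> (x - p) \<bullet> v = 0"
  shows "orth_proj V x = p"
  unfolding orth_proj_def
proof (rule the_equality)
  show "p \<in> V \<and> (\<forall>v\<in>V. (x - p) \<bullet> v = 0)"
    using assms(2,3) by blast
next
  fix q
  assume q: "q \<in> V \<and> (\<forall>v\<in>V. (x - q) \<bullet> v = 0)"
  then have "p - q \<in> V"
    using assms(1,2) by (simp add: subspace_diff)
  then have "(p - q) \<bullet> (p - q) = 0"
    using q assms(3)[of "p - q"] by (simp add: inner_diff_left)
  then show "q = p" by simp
qed

lemma orth_proj_span_orthonormal: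
  assumes "orthonormal_on A e" "finite A"
  shows "orth_proj (span (e ` A)) x = (\<Sum>k\<in>A. (e k \<bullet> x) *\<^sub>R e k)"
proof (rule orth_proj_eqI)
  show "(\<Sum>k\<in>A. (e k \<bullet> x) *\<^sub>R e k) \<in> span (e ` A)"
    by (intro span_sum span_mul span_base imageI)
  have "(x - (\<Sum>k\<in>A. (e k \<bullet> x) *\<^sub>R e k)) \<bullet> e i = 0" if "i \<in> A" for i
    using inner_sum_orthonormal[OF assms order_refl that, of "\<lambda>k. e k \<bullet> x"] that
    by (metis inner_commute inner_diff_right right_minus_eq)
  then show "(x - (\<Sum>k\<in>A. (e k \<bullet> x) *\<^sub>R e k)) \<bullet> v = 0" if "v \<in> span (e ` A)" for v
    using orthogonal_to_span[OF that] unfolding orthogonal_def by blast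
qed simp

lemma inner_eq_0_if_orth_proj_eq_0:
  assumes "orthonormal_on A e" "finite A" "orth_proj (span (e ` A)) x = 0" "i \<in> A"
  shows "e i \<bullet> x = 0"
proof -
  have "e i \<bullet> x = (\<Sum>k\<in>A. (e k \<bullet> x) *\<^sub>R e k) \<bullet> e i"
    using inner_sum_orthonormal[OF assms(1,2) order_refl assms(4), of "\<lambda>k. e k \<bullet> x"] assms(4)
    by simp
  also have "\<dots> = orth_proj (span (e ` A)) x \<bullet> e i"
    by (simp only: orth_proj_span_orthonormal[OF assms(1,2)])
  finally show ?thesis
    using assms(3) by simp
qed

lemma spec_pow_sums:
  assumes "orthonormal_on UNIV (\<lambda>j. e (Suc j))" "decseq (\<lambda>j. lam (Suc j))"
    and "\<forall>j. 0 \<le> lam (Suc j)" "0 \<le> r"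
  shows "(\<lambda>j. (lam (Suc j) powr r * (e (Suc j) \<bullet> u)) *\<^sub>R e (Suc j)) sums spec_pow lam e r u"
proof -
  define c where "c j = lam (Suc j) powr r * (e (Suc j) \<bullet> u)" for j
  have "(c j)\<^sup>2 \<le> (lam 1 powr r)\<^sup>2 * (e (Suc j) \<bullet> u)\<^sup>2" for j
  proof -
    have "lam (Suc j) powr r \<le> lam 1 powr r"
      using assms(3,4) decseqD[OF assms(2), of 0 j] by (simp add: powr_mono2)
    then have "\<bar>c j\<bar> \<le> lam 1 powr r * \<bar>e (Suc j) \<bullet> u\<bar>"
      unfolding c_def by (simp add: abs_mult mult_right_mono)
    then have "\<bar>c j\<bar>\<^sup>2 \<le> (lam 1 powr r * \<bar>e (Suc j) \<bullet> u\<bar>)\<^sup>2"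
      by (rule power_mono) simp
    then show ?thesis
      by (simp add: power_mult_distrib)
  qed
  then have "summable (\<lambda>j. (c j)\<^sup>2)"
    by (intro summable_comparison_test[OF _ summable_mult[OF summable_bessel[OF assms(1)]]]) auto
  then show ?thesis
    unfolding spec_pow_def c_def[symmetric]
    using summable_orthonormal_series[OF assms(1)] summable_sums by blast
qed

lemma norm_spec_pow_le:
  assumes "orthonormal_on UNIV (\<lambda>j. e (Suc j))" "decseq (\<lambda>j. lam (Suc j))"
    and "\<forall>j. 0 \<le> lam (Suc j)" "0 \<le> r"
    and "\<forall>j<m. e (Suc j) \<bullet> spec_pow lam e r u = 0"
  shows "norm (spec_pow lam e r u) \<le> lam (Suc m) powr r * norm u"
proof (rule norm_orthonormal_series_le[OF assms(1) spec_pow_sums[OF assms(1-4)]])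
  fix j
  show "\<bar>lam (Suc j) powr r * (e (Suc j) \<bullet> u)\<bar> \<le> lam (Suc m) powr r * \<bar>e (Suc j) \<bullet> u\<bar>"
  proof (cases "j < m")
    case True
    have "lam (Suc j) powr r * (e (Suc j) \<bullet> u) = e (Suc j) \<bullet> spec_pow lam e r u"
      by (rule inner_orthonormal_series[OF assms(1) spec_pow_sums[OF assms(1-4)], symmetric])
    also have "\<dots> = 0"
      using True assms(5) by simp
    finally have coefficient_eq_0: "lam (Suc j) powr r * (e (Suc j) \<bullet> u) = 0" .
    show ?thesis
      unfolding coefficient_eq_0 by simp
  next
    case False
    then have "lam (Suc j) powr r \<le> lam (Suc m) powr r"
      using assms(3,4) decseqD[OF assms(2), of m j] by (simp add: powr_mono2)
    then show ?thesis
      by (simp add: abs_mult mult_right_mono)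
  qed
qed simp

lemma norm_spec_pow_le_if_orth_proj_eq_0:
  assumes "orthonormal_on {1..} e" "decseq (\<lambda>j. lam (Suc j))"
    and "\<forall>j. 0 \<le> lam (Suc j)" "0 \<le> r" "norm u \<le> R"
    and "orth_proj (span (e ` {1..m})) (spec_pow lam e r u) = 0"
  shows "norm (spec_pow lam e r u) \<le> R * lam (Suc m) powr r"
proof -
  have "orthonormal_on UNIV (\<lambda>j. e (Suc j))" "orthonormal_on {1..m} e"
    using assms(1) by (simp_all add: orthonormal_on_def)
  then have "norm (spec_pow lam e r u) \<le> lam (Suc m) powr r * norm u"
    using inner_eq_0_if_orth_proj_eq_0[OF _ finite_atLeastAtMost assms(6)]
    by (intro norm_spec_pow_le[OF _ assms(2-4)]) auto
  also have "\<dots> \<le> lam (Suc m) powr r * R"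
    using assms(5) by (intro mult_left_mono) auto
  finally show ?thesis
    by (simp add: mult.commute)
qed

lemma calibration_gap_nonneg:
  fixes p s1 s0 :: real
  assumes "0 < p" "p = p * s1 + (1 - p) * s0" "0 \<le> s0"
  shows "0 \<le> 1 - s1 + s0"
proof -
  have "p * (1 - s1 + s0) = s0"
    using assms(2) by (simp add: algebra_simps)
  with assms(1,3) show ?thesis
    by (metis zero_le_mult_iff not_less)
qed

lemma calibrated_error_le_half_gap:
  fixes p s1 s0 :: real
  assumes "0 < p" "p = p * s1 + (1 - p) * s0" "0 \<le> s0"
  shows "p * (1 - s1) + (1 - p) * s0 \<le> (1 - s1 + s0) / 2"
proof -
  define x where "x = 1 - s1 + s0"
  have "4 * (p * (1 - p)) \<le> 1"
    using zero_le_power2[of "2 * p - 1"] by (simp add: algebra_simps power2_eq_square)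
  then have "4 * (p * (1 - p)) * x \<le> 1 * x"
    using calibration_gap_nonneg[OF assms] unfolding x_def by (intro mult_right_mono)
  moreover have "p * (1 - s1) + (1 - p) * s0 = 2 * (p * (1 - p)) * x"
    using assms(2) unfolding x_def by algebra
  ultimately show ?thesis
    unfolding x_def by linarith
qed

lemma calibration_gap_eq:
  fixes pa pb s1a s0a s1b s0b :: real
  assumes "pa = pa * s1a + (1 - pa) * s0a" "pb = pb * s1b + (1 - pb) * s0b"
  shows "(pa - pb) * (1 - s1a + s0a) = pb * (s1a - s1b) + (1 - pb) * (s0a - s0b)"
  using assms by (simp add: algebra_simps)

lemma calibrated_error_le:
  fixes pa pb s1a s0a s1b s0b K1 K0 B :: real
  assumes "0 < pa" "0 \<le> pb" "pb \<le> 1" "pa \<noteq> pb"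
    and "pa = pa * s1a + (1 - pa) * s0a" "pb = pb * s1b + (1 - pb) * s0b" "0 \<le> s0a"
    and "\<bar>s1a - s1b\<bar> \<le> K1" "\<bar>s0a - s0b\<bar> \<le> K0" "pb * K1 + (1 - pb) * K0 \<le> B"
  shows "pa * (1 - s1a) + (1 - pa) * s0a \<le> B / (2 * \<bar>pa - pb\<bar>)"
proof -
  have "0 \<le> 1 - s1a + s0a"
    using assms(1,5,7) by (rule calibration_gap_nonneg)
  then have "\<bar>pa - pb\<bar> * (1 - s1a + s0a) = \<bar>pb * (s1a - s1b) + (1 - pb) * (s0a - s0b)\<bar>"
    by (simp add: abs_mult calibration_gap_eq[OF assms(5,6), symmetric])
  also have "\<dots> \<le> pb * \<bar>s1a - s1b\<bar> + (1 - pb) * \<bar>s0a - s0b\<bar>"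
    using assms(2,3) abs_triangle_ineq[of "pb * (s1a - s1b)" "(1 - pb) * (s0a - s0b)"]
    by (simp add: abs_mult)
  also have "\<dots> \<le> B"
    using mult_left_mono[OF assms(8,2)] mult_left_mono[OF assms(9), of "1 - pb"] assms(3,10)
    by linarith
  finally have "1 - s1a + s0a \<le> B / \<bar>pa - pb\<bar>"
    using assms(4) by (simp add: pos_le_divide_eq mult.commute)
  then show ?thesis
    using calibrated_error_le_half_gap[OF assms(1,5,7)] by simp
qed

locale calibrated_binary_score = prob_space M
  for M :: "'a measure" and Y :: "'a \<Rightarrow> real" and G :: "'a \<Rightarrow> 'g" and a b :: 'g
    and p :: "'g \<Rightarrow> real" and S :: "'a \<Rightarrow> real" +
  assumes Y_measurable[measurable]: "Y \<in> borel_measurable M"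
    and Y_binary: "\<forall>\<omega>\<in>space M. Y \<omega> \<in> {0, 1}"
    and G_measurable[measurable]: "G \<in> measurable M (count_space UNIV)"
    and groups_distinct: "a \<noteq> b"
    and G_values: "\<forall>\<omega>\<in>space M. G \<omega> \<in> {a, b}"
    and group_pos: "\<forall>g\<in>{a, b}. measure M {\<omega>\<in>space M. G \<omega> = g} > 0"
    and p_eq: "\<forall>g\<in>{a, b}. p g = cond_prob_ev M {\<omega>\<in>space M. G \<omega> = g} {\<omega>\<in>space M. Y \<omega> = 1}"
    and p_strict: "\<forall>g\<in>{a, b}. 0 < p g \<and> p g < 1"
    and S_measurable[measurable]: "S \<in> borel_measurable M"
    and S_unit: "AE \<omega> in M. 0 \<le> S \<omega> \<and> S \<omega> \<le> 1"
    and S_calibrated: "\<forall>g\<in>{a, b}. cond_exp_ev M {\<omega>\<in>space M. G \<omega> = g} S = p g"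
begin

definition group_event :: "'g \<Rightarrow> 'a set" where
  "group_event g = {\<omega>\<in>space M. G \<omega> = g}"

definition cell :: "real \<Rightarrow> 'g \<Rightarrow> 'a set" where
  "cell y g = {\<omega>\<in>space M. Y \<omega> = y \<and> G \<omega> = g}"

definition cond_mean :: "real \<Rightarrow> 'g \<Rightarrow> real" where
  "cond_mean y g = cond_exp_ev M (cell y g) S"

lemma sets_group_event[measurable]: "group_event g \<in> sets M"
  unfolding group_event_def by measurable

lemma sets_cell[measurable]: "cell y g \<in> sets M"
  unfolding cell_def by measurable

lemma integrable_S: "integrable M S"
  using S_unit by (intro integrable_const_bound[where B = 1]) (auto elim: AE_mp)

lemma integrable_indicator_S: "A \<in> sets M \<Longrightarrow> integrable M (\<lambda>\<omega>. indicator A \<omega> * S \<omega>)"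
  using integrable_real_mult_indicator[OF _ integrable_S] by (simp add: mult.commute)

lemma integrable_indicator_cell: "integrable M (indicator (cell y g) :: 'a \<Rightarrow> real)"
  by (simp add: less_top[symmetric])

lemma measure_group_event_pos: "g \<in> {a, b} \<Longrightarrow> 0 < measure M (group_event g)"
  using group_pos unfolding group_event_def by blast

lemma measure_group_event_sum: "measure M (group_event a) + measure M (group_event b) = 1"
proof -
  have "group_event a \<union> group_event b = space M" "group_event a \<inter> group_event b = {}"
    using G_values groups_distinct by (auto simp: group_event_def)
  then show ?thesis
    using finite_measure_Union[OF sets_group_event sets_group_event] prob_space by metis
qed

lemma measure_cell:
  assumes "g \<in> {a, b}"
  shows "measure M (cell 1 g) = p g * measure M (group_event g)"
    and "measure M (cell 0 g) = (1 - p g) * measure M (group_event g)"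
proof -
  have "group_event g \<inter> {\<omega>\<in>space M. Y \<omega> = 1} = cell 1 g"
    by (auto simp: group_event_def cell_def)
  moreover have "p g = cond_prob_ev M (group_event g) {\<omega>\<in>space M. Y \<omega> = 1}"
    using p_eq assms unfolding group_event_def by blast
  ultimately have "p g = measure M (cell 1 g) / measure M (group_event g)"
    by (simp add: cond_prob_ev_def)
  then show cell_1: "measure M (cell 1 g) = p g * measure M (group_event g)"
    using measure_group_event_pos[OF assms] by simp
  have "group_event g = cell 0 g \<union> cell 1 g" "cell 0 g \<inter> cell 1 g = {}"
    using Y_binary by (auto simp: group_event_def cell_def)
  then have "measure M (group_event g) = measure M (cell 0 g) + measure M (cell 1 g)"
    using finite_measure_Union[OF sets_cell sets_cell] by simp
  with cell_1 show "measure M (cell 0 g) = (1 - p g) * measure M (group_event g)"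
    by (simp add: algebra_simps)
qed

lemma cond_mean_nonneg: "0 \<le> cond_mean y g"
proof -
  have "AE \<omega> in M. 0 \<le> indicator (cell y g) \<omega> * S \<omega>"
    using S_unit by eventually_elim simp
  then show ?thesis
    unfolding cond_mean_def cond_exp_ev_def by (simp add: integral_nonneg_AE)
qed

lemma integral_cell_S:
  assumes "y \<in> {0, 1}" "g \<in> {a, b}"
  shows "(\<integral>\<omega>. indicator (cell y g) \<omega> * S \<omega> \<partial>M) = measure M (cell y g) * cond_mean y g"
proof -
  have "measure M (cell y g) \<noteq> 0"
    using assms measure_cell[OF assms(2)] p_strict measure_group_event_pos[OF assms(2)] by auto
  then show ?thesis
    unfolding cond_mean_def cond_exp_ev_def by simp
qed

lemma cond_mean_calibration:
  assumes "g \<in> {a, b}"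
  shows "p g = p g * cond_mean 1 g + (1 - p g) * cond_mean 0 g"
proof -
  have "cond_exp_ev M (group_event g) S = p g"
    using S_calibrated assms unfolding group_event_def by blast
  then have "p g * measure M (group_event g) = (\<integral>\<omega>. indicator (group_event g) \<omega> * S \<omega> \<partial>M)"
    using measure_group_event_pos[OF assms] by (simp add: cond_exp_ev_def field_simps)
  also have "\<dots> = (\<integral>\<omega>. indicator (cell 1 g) \<omega> * S \<omega> + indicator (cell 0 g) \<omega> * S \<omega> \<partial>M)"
    using Y_binary
    by (intro Bochner_Integration.integral_cong) (auto simp: group_event_def cell_def indicator_def)
  also have "\<dots> = (\<integral>\<omega>. indicator (cell 1 g) \<omega> * S \<omega> \<partial>M) + (\<integral>\<omega>. indicator (cell 0 g) \<omega> * S \<omega> \<partial>M)"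
    by (intro Bochner_Integration.integral_add integrable_indicator_S sets_cell)
  also have "\<dots> = measure M (group_event g) * (p g * cond_mean 1 g + (1 - p g) * cond_mean 0 g)"
    using assms by (simp add: integral_cell_S measure_cell) (simp add: algebra_simps)
  finally show ?thesis
    using measure_group_event_pos[OF assms] by (simp add: mult.commute)
qed

lemma integrable_abs_diff: "integrable M (\<lambda>\<omega>. \<bar>S \<omega> - Y \<omega>\<bar>)"
proof (rule integrable_const_bound[where B = 1])
  show "AE \<omega> in M. norm \<bar>S \<omega> - Y \<omega>\<bar> \<le> 1"
    using S_unit AE_space by eventually_elim (use Y_binary in auto)
qed simp

lemma integral_group_event_abs_diff:
  assumes "g \<in> {a, b}"
  shows "(\<integral>\<omega>. indicator (group_event g) \<omega> * \<bar>S \<omega> - Y \<omega>\<bar> \<partial>M)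
    = measure M (group_event g) * (p g * (1 - cond_mean 1 g) + (1 - p g) * cond_mean 0 g)"
proof -
  have "(\<integral>\<omega>. indicator (group_event g) \<omega> * \<bar>S \<omega> - Y \<omega>\<bar> \<partial>M)
      = (\<integral>\<omega>. indicator (cell 1 g) \<omega> - indicator (cell 1 g) \<omega> * S \<omega>
                + indicator (cell 0 g) \<omega> * S \<omega> \<partial>M)"
  proof (rule integral_cong_AE)
    show "AE \<omega> in M. indicator (group_event g) \<omega> * \<bar>S \<omega> - Y \<omega>\<bar>
        = indicator (cell 1 g) \<omega> - indicator (cell 1 g) \<omega> * S \<omega> + indicator (cell 0 g) \<omega> * S \<omega>"
      using S_unit AE_space
      by eventually_elim (use Y_binary in \<open>auto simp: group_event_def cell_def indicator_def\<close>)
  qed measurable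
  also have "\<dots> = measure M (cell 1 g) - (\<integral>\<omega>. indicator (cell 1 g) \<omega> * S \<omega> \<partial>M)
                + (\<integral>\<omega>. indicator (cell 0 g) \<omega> * S \<omega> \<partial>M)"
    by (simp add: Bochner_Integration.integral_add Bochner_Integration.integral_diff
        Bochner_Integration.integrable_diff integrable_indicator_S integrable_indicator_cell)
  also have "\<dots>
      = measure M (group_event g) * (p g * (1 - cond_mean 1 g) + (1 - p g) * cond_mean 0 g)"
    using assms by (simp add: integral_cell_S measure_cell) (simp add: algebra_simps)
  finally show ?thesis .
qed

lemma integral_abs_diff:
  "(\<integral>\<omega>. \<bar>S \<omega> - Y \<omega>\<bar> \<partial>M)
    = measure M (group_event a) * (p a * (1 - cond_mean 1 a) + (1 - p a) * cond_mean 0 a)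
    + measure M (group_event b) * (p b * (1 - cond_mean 1 b) + (1 - p b) * cond_mean 0 b)"
proof -
  have "(\<integral>\<omega>. \<bar>S \<omega> - Y \<omega>\<bar> \<partial>M)
      = (\<integral>\<omega>. indicator (group_event a) \<omega> * \<bar>S \<omega> - Y \<omega>\<bar>
                + indicator (group_event b) \<omega> * \<bar>S \<omega> - Y \<omega>\<bar> \<partial>M)"
    using G_values groups_distinct
    by (intro Bochner_Integration.integral_cong) (auto simp: group_event_def indicator_def)
  also have "\<dots> = (\<integral>\<omega>. indicator (group_event a) \<omega> * \<bar>S \<omega> - Y \<omega>\<bar> \<partial>M)
                + (\<integral>\<omega>. indicator (group_event b) \<omega> * \<bar>S \<omega> - Y \<omega>\<bar> \<partial>M)"
    using integrable_real_mult_indicator[OF sets_group_event integrable_abs_diff]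
    by (subst Bochner_Integration.integral_add) (simp_all add: mult.commute)
  finally show ?thesis
    by (simp add: integral_group_event_abs_diff)
qed

lemma integral_abs_diff_le_embedding_gap:
  fixes \<mu> :: "real \<Rightarrow> 'g \<Rightarrow> 'h::real_inner" and w :: 'h
  assumes "p a \<noteq> p b" and cond_mean_eq: "\<forall>y\<in>{0, 1}. \<forall>g\<in>{a, b}. cond_mean y g = \<mu> y g \<bullet> w"
    and "norm w \<le> W"
  defines "\<rho> \<equiv> max (p a * norm (\<mu> 1 a - \<mu> 1 b) + (1 - p a) * norm (\<mu> 0 a - \<mu> 0 b))
                  (p b * norm (\<mu> 1 a - \<mu> 1 b) + (1 - p b) * norm (\<mu> 0 a - \<mu> 0 b))"
  shows "(\<integral>\<omega>. \<bar>S \<omega> - Y \<omega>\<bar> \<partial>M) \<le> W * \<rho> / (2 * \<bar>p a - p b\<bar>)"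
proof -
  have "0 \<le> W"
    using assms(3) norm_ge_zero[of w] by linarith
  define K where "K y = W * norm (\<mu> y a - \<mu> y b)" for y
  have gap: "\<bar>cond_mean y a - cond_mean y b\<bar> \<le> K y" "\<bar>cond_mean y b - cond_mean y a\<bar> \<le> K y"
    if "y \<in> {0, 1}" for y
  proof -
    have "cond_mean y a - cond_mean y b = (\<mu> y a - \<mu> y b) \<bullet> w"
      using cond_mean_eq that by (auto simp: inner_diff_left)
    then have "\<bar>cond_mean y a - cond_mean y b\<bar> \<le> norm (\<mu> y a - \<mu> y b) * norm w"
      by (simp add: Cauchy_Schwarz_ineq2)
    also have "\<dots> \<le> norm (\<mu> y a - \<mu> y b) * W"
      using assms(3) by (intro mult_left_mono) auto
    finally show "\<bar>cond_mean y a - cond_mean y b\<bar> \<le> K y"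
      by (simp add: K_def mult.commute)
    then show "\<bar>cond_mean y b - cond_mean y a\<bar> \<le> K y"
      by (simp add: abs_minus_commute)
  qed
  have gap_combination_le: "p h * K 1 + (1 - p h) * K 0 \<le> W * \<rho>" if "h \<in> {a, b}" for h
  proof -
    have "p h * K 1 + (1 - p h) * K 0
        = W * (p h * norm (\<mu> 1 a - \<mu> 1 b) + (1 - p h) * norm (\<mu> 0 a - \<mu> 0 b))"
      unfolding K_def by (simp add: algebra_simps)
    also have "\<dots> \<le> W * \<rho>"
      using that \<open>0 \<le> W\<close> unfolding \<rho>_def by (intro mult_left_mono) auto
    finally show ?thesis .
  qed
  note error_bound = calibrated_error_le[where ?K1.0 = "K 1" and ?K0.0 = "K 0" and B = "W * \<rho>"]
  note error_bound_premises = assms(1) p_strict cond_mean_calibration cond_mean_nonneg gap gap_combination_le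
  have error_a:
    "p a * (1 - cond_mean 1 a) + (1 - p a) * cond_mean 0 a \<le> W * \<rho> / (2 * \<bar>p a - p b\<bar>)"
    using error_bound_premises by (intro error_bound) auto
  have "p b * (1 - cond_mean 1 b) + (1 - p b) * cond_mean 0 b \<le> W * \<rho> / (2 * \<bar>p b - p a\<bar>)"
    using error_bound_premises by (intro error_bound) auto
  then have error_b:
    "p b * (1 - cond_mean 1 b) + (1 - p b) * cond_mean 0 b \<le> W * \<rho> / (2 * \<bar>p a - p b\<bar>)"
    by (simp add: abs_minus_commute)
  show ?thesis
    unfolding integral_abs_diff
    by (rule convex_bound_le[OF error_a error_b])
      (use measure_group_event_pos measure_group_event_sum in \<open>auto simp: less_imp_le\<close>)
qed

lemma measure_abs_diff_gt_le:
  assumes "0 < t"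
  shows "measure M {\<omega>\<in>space M. \<bar>S \<omega> - Y \<omega>\<bar> > t} \<le> (\<integral>\<omega>. \<bar>S \<omega> - Y \<omega>\<bar> \<partial>M) / t"
proof -
  have "measure M {\<omega>\<in>space M. \<bar>S \<omega> - Y \<omega>\<bar> > t} \<le> measure M {\<omega>\<in>space M. \<bar>S \<omega> - Y \<omega>\<bar> \<ge> t}"
    by (intro finite_measure_mono) auto
  also have "\<dots> \<le> (\<integral>\<omega>. \<bar>S \<omega> - Y \<omega>\<bar> \<partial>M) / t"
    using integrable_abs_diff assms
    by (intro integral_Markov_inequality_measure[where A = "space M"]) auto
  finally show ?thesis .
qed

lemma AE_eq_if_integral_abs_diff_le_0:
  assumes "(\<integral>\<omega>. \<bar>S \<omega> - Y \<omega>\<bar> \<partial>M) \<le> 0"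
  shows "AE \<omega> in M. S \<omega> = Y \<omega>"
proof -
  have "0 \<le> (\<integral>\<omega>. \<bar>S \<omega> - Y \<omega>\<bar> \<partial>M)"
    by (intro integral_nonneg_AE) simp
  with assms have "(\<integral>\<omega>. \<bar>S \<omega> - Y \<omega>\<bar> \<partial>M) = 0"
    by simp
  then show ?thesis
    using integral_nonneg_eq_0_iff_AE[OF integrable_abs_diff] by simp
qed

end

lemma powr_bounds_of_power_law:
  fixes c\<^sub>1 c\<^sub>2 x l \<alpha> r :: real
  assumes "0 < c\<^sub>1" "0 < c\<^sub>2" "0 < x" "0 \<le> r"
    and "c\<^sub>1 * x powr (-\<alpha>) \<le> l" "l \<le> c\<^sub>2 * x powr (-\<alpha>)"
  shows "c\<^sub>1 powr r * x powr (-\<alpha> * r) \<le> l powr r" "l powr r \<le> c\<^sub>2 powr r * x powr (-\<alpha> * r)"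
proof -
  have scale: "(c * x powr (-\<alpha>)) powr r = c powr r * x powr (-\<alpha> * r)" if "0 < c" for c
    using that assms(3) by (simp add: powr_mult powr_powr)
  show "c\<^sub>1 powr r * x powr (-\<alpha> * r) \<le> l powr r"
    using powr_mono2[OF assms(4) _ assms(5)] scale[OF assms(1)] assms(1,3) by simp
  have "0 < c\<^sub>1 * x powr (-\<alpha>)"
    using assms(1,3) by simp
  then show "l powr r \<le> c\<^sub>2 powr r * x powr (-\<alpha> * r)"
    using powr_mono2[OF assms(4) _ assms(6)] scale[OF assms(2)] assms(5) by simp
qed

lemma nonpos_if_frequently_le_power_law:
  fixes x C \<beta> :: real
  assumes "0 < \<beta>" "\<forall>N. \<exists>m\<ge>N. x \<le> C * real (m + 1) powr (-\<beta>)"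
  shows "x \<le> 0"
proof (rule ccontr)
  assume "\<not> x \<le> 0"
  have "filterlim (\<lambda>m. real (m + 1)) at_top sequentially"
    by (rule filterlim_compose[OF filterlim_real_sequentially filterlim_add_const_nat_at_top])
  then have "(\<lambda>m. C * real (m + 1) powr (-\<beta>)) \<longlonglongrightarrow> 0"
    using assms(1) by (intro tendsto_mult_right_zero tendsto_neg_powr[rotated]) simp_all
  then have "eventually (\<lambda>m. C * real (m + 1) powr (-\<beta>) < x) sequentially"
    using \<open>\<not> x \<le> 0\<close> by (intro order_tendstoD(2)) auto
  then obtain N where N: "\<And>m. m \<ge> N \<Longrightarrow> C * real (m + 1) powr (-\<beta>) < x"
    unfolding eventually_sequentially by blast
  obtain m where "m \<ge> N" "x \<le> C * real (m + 1) powr (-\<beta>)"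
    using assms(2) by blast
  with N show False
    by (meson not_less)
qed

theorem theorem8:
  fixes M :: "'o measure" and MX :: "'x measure"
    and X :: "'o \<Rightarrow> 'x" and Y :: "'o \<Rightarrow> real" and G :: "'o \<Rightarrow> 'g" and a b :: 'g
    and p :: "'g \<Rightarrow> real"
    and k :: "'x \<Rightarrow> 'x \<Rightarrow> real" and \<phi> :: "'x \<Rightarrow> 'h::{real_inner,complete_space}" and \<kappa> :: real
    and \<mu> :: 'h and Sig :: "'h \<Rightarrow> 'h" and lam :: "nat \<Rightarrow> real" and e :: "nat \<Rightarrow> 'h"
    and \<alpha> c\<^sub>1 c\<^sub>2 r R W :: real
    and muYG :: "real \<Rightarrow> 'g \<Rightarrow> 'h" and u :: "real \<Rightarrow> 'h" and w :: 'h
  defines "EQf \<equiv> \<lambda>f::'x \<Rightarrow> real. (cond_exp_ev M {\<omega>\<in>space M. G \<omega> = a} (\<lambda>\<omega>. f (X \<omega>))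
                                 + cond_exp_ev M {\<omega>\<in>space M. G \<omega> = b} (\<lambda>\<omega>. f (X \<omega>))) / 2"
      and "\<delta> \<equiv> \<lambda>y. muYG y a - muYG y b"
      and "S \<equiv> \<lambda>\<omega>. w \<bullet> \<phi> (X \<omega>)"
      and "\<Delta>p \<equiv> p a - p b"
  assumes M: "prob_space M"
      and X_meas: "X \<in> measurable M MX"
      and Y_meas: "Y \<in> borel_measurable M" and Y_vals: "\<forall>\<omega>\<in>space M. Y \<omega> \<in> {0, 1}"
      and G_meas: "G \<in> measurable M (count_space UNIV)"
      and ab: "a \<noteq> b" and G_vals: "\<forall>\<omega>\<in>space M. G \<omega> \<in> {a, b}"
      and G_pos: "\<forall>g\<in>{a, b}. measure M {\<omega>\<in>space M. G \<omega> = g} > 0"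
      and p_def: "\<forall>g\<in>{a, b}. p g = cond_prob_ev M {\<omega>\<in>space M. G \<omega> = g} {\<omega>\<in>space M. Y \<omega> = 1}"
      and p_range: "\<forall>g\<in>{a, b}. 0 < p g \<and> p g < 1"
      and Dp: "\<Delta>p \<noteq> 0"
      \<comment> \<open>kernel, RKHS and feature map\<close>
      and k_feat: "\<forall>x y. k x y = \<phi> x \<bullet> \<phi> y"
      and k_meas: "(\<lambda>(x, y). k x y) \<in> borel_measurable (MX \<Otimes>\<^sub>M MX)"
      and k_pd: "\<forall>n (c :: nat \<Rightarrow> real) (xs :: nat \<Rightarrow> 'x).
                   (\<Sum>i<n. \<Sum>j<n. c i * c j * k (xs i) (xs j)) \<ge> 0"
      and rkhs: "closure (span (range \<phi>)) = UNIV"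
      and phi_meas: "\<forall>h. (\<lambda>x. \<phi> x \<bullet> h) \<in> borel_measurable MX"
      and k_bdd: "\<forall>x. k x x \<le> \<kappa>\<^sup>2"
      \<comment> \<open>mean embedding and covariance operator of Q = (P_a + P_b)/2\<close>
      and mu_def: "\<forall>h. \<mu> \<bullet> h = EQf (\<lambda>x. \<phi> x \<bullet> h)"
      and Sig_def: "\<forall>f g. Sig f \<bullet> g = EQf (\<lambda>x. ((\<phi> x - \<mu>) \<bullet> f) * ((\<phi> x - \<mu>) \<bullet> g))"
      and Sig_expand: "\<forall>f. (\<lambda>j. (lam (Suc j) * (e (Suc j) \<bullet> f)) *\<^sub>R e (Suc j)) sums Sig f"
      and e_orthonormal: "\<forall>i\<ge>1. \<forall>j\<ge>1. e i \<bullet> e j = (if i = j then 1 else 0)"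
      and lam_mono: "\<forall>j\<ge>1. lam (Suc j) \<le> lam j" and lam_nonneg: "\<forall>j\<ge>1. lam j \<ge> 0"
      and \<alpha>: "\<alpha> > 1" and c1: "c\<^sub>1 > 0" and c2: "c\<^sub>2 > 0"
      and decay: "\<forall>j\<ge>1. c\<^sub>1 * real j powr (-\<alpha>) \<le> lam j \<and> lam j \<le> c\<^sub>2 * real j powr (-\<alpha>)"
      \<comment> \<open>class-conditional mean embeddings and source condition\<close>
      and muYG_def: "\<forall>y\<in>{0, 1}. \<forall>g\<in>{a, b}. \<forall>h. muYG y g \<bullet> h =
                        cond_exp_ev M {\<omega>\<in>space M. Y \<omega> = y \<and> G \<omega> = g} (\<lambda>\<omega>. \<phi> (X \<omega>) \<bullet> h)"
      and r: "r > 0" and R: "R > 0"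
      and source: "\<forall>y\<in>{0, 1}. \<delta> y = spec_pow lam e r (u y) \<and> norm (u y) \<le> R"
      \<comment> \<open>the score S\<close>
      and S_meas: "S \<in> borel_measurable M"
      and S_range: "AE \<omega> in M. 0 \<le> S \<omega> \<and> S \<omega> \<le> 1"
      and w_bdd: "norm w \<le> W"
      and S_calib: "\<forall>g\<in>{a, b}. cond_exp_ev M {\<omega>\<in>space M. G \<omega> = g} S = p g"
  shows "(\<forall>m::nat. (\<forall>y\<in>{0, 1}. orth_proj (span (e ` {1..m})) (\<delta> y) = 0) \<longrightarrow>
            (let \<rho> = max (p a * norm (\<delta> 1) + (1 - p a) * norm (\<delta> 0))
                          (p b * norm (\<delta> 1) + (1 - p b) * norm (\<delta> 0))
             in \<rho> \<le> R * lam (m + 1) powr r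
                \<and> c\<^sub>1 powr r * (R * real (m + 1) powr (-\<alpha> * r)) \<le> R * lam (m + 1) powr r
                \<and> R * lam (m + 1) powr r \<le> c\<^sub>2 powr r * (R * real (m + 1) powr (-\<alpha> * r))
                \<and> (\<forall>t. 0 < t \<and> t \<le> 1 \<longrightarrow>
                     measure M {\<omega>\<in>space M. \<bar>S \<omega> - Y \<omega>\<bar> > t}
                       \<le> W * R * lam (m + 1) powr r / (\<bar>\<Delta>p\<bar> * t))))
         \<and> ((\<forall>N. \<exists>m\<ge>N. \<forall>y\<in>{0, 1}. orth_proj (span (e ` {1..m})) (\<delta> y) = 0)
              \<longrightarrow> (AE \<omega> in M. S \<omega> = Y \<omega>))"
proof -
  interpret calibrated_binary_score M Y G a b p S
    using M Y_meas Y_vals G_meas ab G_vals G_pos p_def p_range S_meas S_range S_calib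
    by (simp add: calibrated_binary_score_def calibrated_binary_score_axioms_def)
  have orthonormal_e: "orthonormal_on {1..} e" and decseq_lam: "decseq (\<lambda>j. lam (Suc j))"
    and lam_Suc_nonneg: "\<forall>j. 0 \<le> lam (Suc j)"
    using e_orthonormal lam_mono lam_nonneg by (auto simp: orthonormal_on_def intro: decseq_SucI)
  define \<rho> where "\<rho> = max (p a * norm (\<delta> 1) + (1 - p a) * norm (\<delta> 0))
                          (p b * norm (\<delta> 1) + (1 - p b) * norm (\<delta> 0))"
  have \<rho>_le: "\<rho> \<le> R * lam (m + 1) powr r"
    if proj: "\<forall>y\<in>{0, 1}. orth_proj (span (e ` {1..m})) (\<delta> y) = 0" for m
  proof -
    have "norm (\<delta> y) \<le> R * lam (m + 1) powr r" if "y \<in> {0, 1}" for y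
      using norm_spec_pow_le_if_orth_proj_eq_0[OF orthonormal_e decseq_lam lam_Suc_nonneg]
        source proj that r by auto
    then show ?thesis
      unfolding \<rho>_def using p_range by (auto intro: convex_bound_le)
  qed
  have "(\<lambda>\<omega>. \<phi> (X \<omega>) \<bullet> w) = S"
    by (simp add: S_def inner_commute)
  then have "\<forall>y\<in>{0, 1}. \<forall>g\<in>{a, b}. cond_mean y g = muYG y g \<bullet> w"
    using muYG_def unfolding cond_mean_def cell_def by simp
  from integral_abs_diff_le_embedding_gap[OF _ this w_bdd]
  have risk: "(\<integral>\<omega>. \<bar>S \<omega> - Y \<omega>\<bar> \<partial>M) \<le> W * \<rho> / (2 * \<bar>\<Delta>p\<bar>)"
    using Dp unfolding \<rho>_def \<delta>_def \<Delta>p_def by simp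
  have decay_R: "c\<^sub>1 powr r * (R * real (m + 1) powr (-\<alpha> * r)) \<le> R * lam (m + 1) powr r"
    "R * lam (m + 1) powr r \<le> c\<^sub>2 powr r * (R * real (m + 1) powr (-\<alpha> * r))" for m
    using powr_bounds_of_power_law[OF c1 c2 _ _ decay[rule_format, THEN conjunct1]
        decay[rule_format, THEN conjunct2], of "m + 1" r] r R
    by (auto simp: mult.left_commute intro: mult_left_mono)
  have "0 \<le> W"
    using norm_ge_zero[of w] w_bdd by linarith
  show ?thesis
    unfolding Let_def \<rho>_def[symmetric]
  proof (intro conjI allI impI)
    fix m and t :: real
    assume proj: "\<forall>y\<in>{0, 1}. orth_proj (span (e ` {1..m})) (\<delta> y) = 0" and t: "0 < t \<and> t \<le> 1"
    have "measure M {\<omega>\<in>space M. \<bar>S \<omega> - Y \<omega>\<bar> > t} \<le> (\<integral>\<omega>. \<bar>S \<omega> - Y \<omega>\<bar> \<partial>M) / t"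
      using t by (intro measure_abs_diff_gt_le) simp
    also have "\<dots> \<le> (W * \<rho> / (2 * \<bar>\<Delta>p\<bar>)) / t"
      using risk t by (intro divide_right_mono) auto
    also have "\<dots> \<le> (W * R * lam (m + 1) powr r / \<bar>\<Delta>p\<bar>) / t"
      using mult_left_mono[OF \<rho>_le[OF proj] \<open>0 \<le> W\<close>] \<open>0 \<le> W\<close> R Dp t
      by (intro divide_right_mono frac_le) (auto simp: mult.assoc)
    finally show "measure M {\<omega>\<in>space M. \<bar>S \<omega> - Y \<omega>\<bar> > t} \<le> W * R * lam (m + 1) powr r / (\<bar>\<Delta>p\<bar> * t)"
      by simp
  next
    assume "\<forall>N. \<exists>m\<ge>N. \<forall>y\<in>{0, 1}. orth_proj (span (e ` {1..m})) (\<delta> y) = 0"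
    moreover have "\<rho> \<le> c\<^sub>2 powr r * R * real (m + 1) powr (- (\<alpha> * r))"
      if "\<forall>y\<in>{0, 1}. orth_proj (span (e ` {1..m})) (\<delta> y) = 0" for m
      using order_trans[OF \<rho>_le[OF that] decay_R(2)[of m]] by (simp add: mult.assoc)
    ultimately have "\<forall>N. \<exists>m\<ge>N. \<rho> \<le> c\<^sub>2 powr r * R * real (m + 1) powr (- (\<alpha> * r))"
      by blast
    then have "\<rho> \<le> 0"
      using \<alpha> r by (intro nonpos_if_frequently_le_power_law[of "\<alpha> * r"]) simp_all
    then have "W * \<rho> / (2 * \<bar>\<Delta>p\<bar>) \<le> 0"
      using \<open>0 \<le> W\<close> by (simp add: divide_nonpos_nonneg mult_nonneg_nonpos)
    with risk show "AE \<omega> in M. S \<omega> = Y \<omega>"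
      by (intro AE_eq_if_integral_abs_diff_le_0) linarith
  qed (use \<rho>_le decay_R in auto)
qed

end
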